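(* Let $\alpha$ be a unit speed Frenet curve in $\mathbb{E}^3$ with Frenet frame $\{T,N,B\}$, curvature $\kappa$ and torsion $\tau$, let $\beta$ be an osculating mate of $\alpha$, let $\theta(s)=\int\kappa ds$ be the antiderivative of $\kappa$ with $\beta'=\sin\theta\,T+\cos\theta\,N$, and let $d(s)=\|\beta(s)\|$ be the distance function of $\beta$. Then the position vector of $\beta$ is $$\beta=\left[\int\left(-\frac{\kappa}{\tau}h'+\sin\theta\right)ds\right]T-\frac{h'}{\tau}N+hB,\qquad\text{where } h(s)=\frac{(dd')'-1}{\tau\cos\theta}$$ (for a suitable antiderivative in the first coefficient).
   Context: $\alpha:I\to\mathbb{E}^3$ is parametrized by arclength $s$, with $T'=\kappa N$, $N'=-\kappa T+\tau B$, $B'=-\tau N$, $\kappa>0$. An osculating mate of $\alpha$ is a curve $\beta(s)=\int(x_1T+x_2N)ds$ with smooth $x_1,x_2$, $x_1^2+x_2^2=1$ and $\beta''\perp\mathrm{span}\{T,N\}$; $\beta$ is assumed to be a Frenet curve (so $\tau\cos\theta\neq0$). The prime denotes $d/ds$. *)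

theory Defs
  imports "HOL-Analysis.Analysis"
begin

end

theory Submission
  imports Defs
begin

(* Write beta = a T + b N + c B with a = beta.T, b = beta.N, c = beta.B.  The tangent of the
   osculating mate is w = sin theta T + cos theta N, and theta' = kappa together with the Frenet
   equations gives w' = tau cos theta B.  Hence (d d')' = (beta.w)' = w.w + beta.w' = 1 + tau cos theta c,
   that is h = c.  Then c' = -tau b gives b = -h'/tau, and a' = sin theta + kappa b. *)

lemma has_real_derivative_inner:
  fixes f g :: "real \<Rightarrow> 'a::real_inner"
  assumes "(f has_vector_derivative f') (at x within S)" "(g has_vector_derivative g') (at x within S)"
  shows "((\<lambda>t. f t \<bullet> g t) has_real_derivative (f x \<bullet> g' + f' \<bullet> g x)) (at x within S)"
  using bounded_bilinear.has_vector_derivative[OF bounded_bilinear_inner assms]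
  by (simp add: has_real_derivative_iff_has_vector_derivative)

lemma orthonormal_cross3_expansion:
  fixes T N v :: "real^3"
  assumes T: "T \<bullet> T = 1" and N: "N \<bullet> N = 1" and TN: "T \<bullet> N = 0"
  shows "v = (v \<bullet> T) *\<^sub>R T + (v \<bullet> N) *\<^sub>R N + (v \<bullet> cross3 T N) *\<^sub>R cross3 T N"
proof -
  define B where "B = cross3 T N"
  have BB: "B \<bullet> B = 1"
    using norm_cross_dot[of T N] T N TN by (simp add: B_def power2_norm_eq_inner norm_eq_sqrt_inner)
  have BT: "cross3 B T = N"
  proof -
    have "cross3 B T = - cross3 T B" by (rule cross_skew)
    then show ?thesis using T TN by (simp add: B_def Lagrange)
  qed
  have BN: "cross3 B N = - T"
  proof -
    have "cross3 B N = - cross3 N B" by (rule cross_skew)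
    then show ?thesis using N TN by (simp add: B_def Lagrange inner_commute)
  qed
  have "v - (v \<bullet> B) *\<^sub>R B = cross3 B (cross3 v B)"
    using BB by (simp add: Lagrange inner_commute)
  also have "cross3 v B = (v \<bullet> N) *\<^sub>R T - (v \<bullet> T) *\<^sub>R N"
    by (simp add: B_def Lagrange)
  also have "cross3 B \<dots> = (v \<bullet> T) *\<^sub>R T + (v \<bullet> N) *\<^sub>R N"
    using BT BN by (simp add: Cross3.right_diff_distrib cross_mult_right)
  finally show ?thesis unfolding B_def by (simp add: algebra_simps)
qed

lemma osculating_tangent_has_vector_derivative:
  fixes T N B :: "real \<Rightarrow> 'a::real_normed_vector"
  assumes "(T has_vector_derivative \<kappa> *\<^sub>R N s) (at s)"
    and "(N has_vector_derivative (- \<kappa> *\<^sub>R T s + \<tau> *\<^sub>R B s)) (at s)"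
    and "(\<theta> has_real_derivative \<kappa>) (at s)"
  shows "((\<lambda>u. sin (\<theta> u) *\<^sub>R T u + cos (\<theta> u) *\<^sub>R N u) has_vector_derivative
           (\<tau> * cos (\<theta> s)) *\<^sub>R B s) (at s)"
  by (rule derivative_eq_intros assms refl)+ (simp add: algebra_simps)

lemma norm_mult_deriv_norm:
  fixes \<beta> :: "real \<Rightarrow> 'a::real_inner"
  assumes \<beta>': "(\<beta> has_vector_derivative v) (at t)"
    and diff: "(\<lambda>u. norm (\<beta> u)) differentiable (at t)"
  shows "norm (\<beta> t) * deriv (\<lambda>u. norm (\<beta> u)) t = \<beta> t \<bullet> v"
proof -
  let ?d = "\<lambda>u. norm (\<beta> u)"
  have d': "(?d has_real_derivative deriv ?d t) (at t)"
    using diff by (simp add: DERIV_deriv_iff_real_differentiable)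
  have "((\<lambda>u. ?d u * ?d u) has_real_derivative 2 * (?d t * deriv ?d t)) (at t)"
    using DERIV_mult[OF d' d'] by (simp add: algebra_simps)
  moreover have "((\<lambda>u. ?d u * ?d u) has_real_derivative 2 * (\<beta> t \<bullet> v)) (at t)"
    using has_real_derivative_inner[OF \<beta>' \<beta>']
    by (simp add: dot_square_norm power2_eq_square inner_commute)
  ultimately show ?thesis using DERIV_unique by fastforce
qed

lemma deriv_norm_mult_deriv_norm:
  fixes \<beta> w :: "real \<Rightarrow> 'a::real_inner"
  assumes "open S" "s \<in> S"
    and \<beta>': "\<And>t. t \<in> S \<Longrightarrow> (\<beta> has_vector_derivative w t) (at t)"
    and diff: "\<And>t. t \<in> S \<Longrightarrow> (\<lambda>u. norm (\<beta> u)) differentiable (at t)"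
    and w': "(w has_vector_derivative w') (at s)"
  shows "deriv (\<lambda>t. norm (\<beta> t) * deriv (\<lambda>u. norm (\<beta> u)) t) s = w s \<bullet> w s + \<beta> s \<bullet> w'"
proof -
  have inner': "((\<lambda>t. \<beta> t \<bullet> w t) has_real_derivative w s \<bullet> w s + \<beta> s \<bullet> w') (at s)"
    using has_real_derivative_inner[OF \<beta>'[OF \<open>s \<in> S\<close>] w'] by (simp add: add.commute)
  have "\<beta> t \<bullet> w t = norm (\<beta> t) * deriv (\<lambda>u. norm (\<beta> u)) t" if "t \<in> S" for t
    using norm_mult_deriv_norm[OF \<beta>'[OF that] diff[OF that]] by simp
  then show ?thesis
    by (intro DERIV_imp_deriv has_field_derivative_transform_within_open[OF inner' assms(1,2)])
qed

theorem theorem8: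
  fixes I :: "real set"
    and \<alpha> \<beta> T N B :: "real \<Rightarrow> real^3"
    and \<kappa> \<tau> x1 x2 \<theta> :: "real \<Rightarrow> real"
  assumes I: "open I" "is_interval I" "I \<noteq> {}"
    and frame: "\<And>s. s \<in> I \<Longrightarrow> norm (T s) = 1 \<and> norm (N s) = 1 \<and> T s \<bullet> N s = 0
                                 \<and> B s = cross3 (T s) (N s)"
    and alpha': "\<And>s. s \<in> I \<Longrightarrow> (\<alpha> has_vector_derivative T s) (at s)"
    and T': "\<And>s. s \<in> I \<Longrightarrow> (T has_vector_derivative \<kappa> s *\<^sub>R N s) (at s)"
    and N': "\<And>s. s \<in> I \<Longrightarrow> (N has_vector_derivative (- \<kappa> s *\<^sub>R T s + \<tau> s *\<^sub>R B s)) (at s)"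
    and B': "\<And>s. s \<in> I \<Longrightarrow> (B has_vector_derivative (- \<tau> s *\<^sub>R N s)) (at s)"
    and kappa_pos: "\<And>s. s \<in> I \<Longrightarrow> \<kappa> s > 0"
    and x_smooth: "\<And>s. s \<in> I \<Longrightarrow> x1 differentiable (at s) \<and> x2 differentiable (at s)"
    and x_unit: "\<And>s. s \<in> I \<Longrightarrow> (x1 s)\<^sup>2 + (x2 s)\<^sup>2 = 1"
    and beta': "\<And>s. s \<in> I \<Longrightarrow> (\<beta> has_vector_derivative (x1 s *\<^sub>R T s + x2 s *\<^sub>R N s)) (at s)"
    and beta'': "\<And>s. s \<in> I \<Longrightarrow> \<exists>v. ((\<lambda>t. x1 t *\<^sub>R T t + x2 t *\<^sub>R N t) has_vector_derivative v) (at s)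
                                  \<and> v \<bullet> T s = 0 \<and> v \<bullet> N s = 0"
    and theta: "\<And>s. s \<in> I \<Longrightarrow> (\<theta> has_real_derivative \<kappa> s) (at s)"
    and theta_beta: "\<And>s. s \<in> I \<Longrightarrow> x1 s = sin (\<theta> s) \<and> x2 s = cos (\<theta> s)"
    and frenet_beta: "\<And>s. s \<in> I \<Longrightarrow> \<tau> s * cos (\<theta> s) \<noteq> 0"
    and d_diff: "\<And>s. s \<in> I \<Longrightarrow> (\<lambda>t. norm (\<beta> t)) differentiable (at s)"
  shows "let d = (\<lambda>t. norm (\<beta> t));
             h = (\<lambda>s. (deriv (\<lambda>t. d t * deriv d t) s - 1) / (\<tau> s * cos (\<theta> s)))
         in \<exists>A. (\<forall>s\<in>I. (A has_real_derivative (- (\<kappa> s / \<tau> s) * deriv h s + sin (\<theta> s))) (at s))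
              \<and> (\<forall>s\<in>I. \<beta> s = A s *\<^sub>R T s - (deriv h s / \<tau> s) *\<^sub>R N s + h s *\<^sub>R B s)"
proof -
  define w where "w t = sin (\<theta> t) *\<^sub>R T t + cos (\<theta> t) *\<^sub>R N t" for t
  define d where "d t = norm (\<beta> t)" for t
  define h where "h s = (deriv (\<lambda>t. d t * deriv d t) s - 1) / (\<tau> s * cos (\<theta> s))" for s
  have orthonormal: "T s \<bullet> T s = 1" "N s \<bullet> N s = 1" "T s \<bullet> N s = 0"
    "B s \<bullet> T s = 0" "B s \<bullet> N s = 0" if "s \<in> I" for s
    using frame[OF that] by (auto simp: dot_square_norm dot_cross_self inner_commute)
  have \<beta>_w: "(\<beta> has_vector_derivative w s) (at s)" if "s \<in> I" for s
    using beta'[OF that] theta_beta[OF that] by (simp add: w_def)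
  have w': "(w has_vector_derivative (\<tau> s * cos (\<theta> s)) *\<^sub>R B s) (at s)" if "s \<in> I" for s
    unfolding w_def[abs_def] using T'[OF that] N'[OF that] theta[OF that]
    by (rule osculating_tangent_has_vector_derivative[where \<kappa> = "\<kappa> s" and \<tau> = "\<tau> s"])
  have h_binormal: "h s = \<beta> s \<bullet> B s" if s: "s \<in> I" for s
  proof -
    have "w s \<bullet> w s = 1"
      using orthonormal[OF s] sin_cos_squared_add[of "\<theta> s"]
      by (simp add: w_def inner_add_left inner_add_right inner_commute power2_eq_square)
    then show ?thesis
      using deriv_norm_mult_deriv_norm[OF I(1) s \<beta>_w d_diff w'[OF s]] frenet_beta[OF s]
      by (simp add: h_def d_def[abs_def])
  qed
  have h': "deriv h s = - \<tau> s * (\<beta> s \<bullet> N s)" if s: "s \<in> I" for s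
  proof -
    have inner_B': "((\<lambda>t. \<beta> t \<bullet> B t) has_real_derivative - \<tau> s * (\<beta> s \<bullet> N s)) (at s)"
      using has_real_derivative_inner[OF \<beta>_w[OF s] B'[OF s]] orthonormal[OF s]
      by (simp add: w_def inner_add_right inner_commute)
    show ?thesis
      using has_field_derivative_transform_within_open[OF inner_B' I(1) s h_binormal[symmetric]]
      by (rule DERIV_imp_deriv)
  qed
  have \<tau>_nonzero: "\<tau> s \<noteq> 0" if "s \<in> I" for s
    using frenet_beta[OF that] by auto
  show ?thesis
    unfolding Let_def d_def[symmetric] h_def[symmetric]
  proof (intro exI[of _ "\<lambda>t. \<beta> t \<bullet> T t"] conjI ballI)
    fix s assume s: "s \<in> I"
    show "((\<lambda>t. \<beta> t \<bullet> T t) has_real_derivative - (\<kappa> s / \<tau> s) * deriv h s + sin (\<theta> s)) (at s)"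
      using has_real_derivative_inner[OF \<beta>_w[OF s] T'[OF s]] orthonormal[OF s] h'[OF s] \<tau>_nonzero[OF s]
      by (simp add: w_def inner_add_right inner_commute)
    show "\<beta> s = (\<beta> s \<bullet> T s) *\<^sub>R T s - (deriv h s / \<tau> s) *\<^sub>R N s + h s *\<^sub>R B s"
      using orthonormal_cross3_expansion[of "T s" "N s" "\<beta> s"] orthonormal[OF s] frame[OF s]
        h_binormal[OF s] h'[OF s] \<tau>_nonzero[OF s]
      by simp
  qed
qed

end
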